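(* Let $(\Omega,\mathcal{F},\mathbf{P})$ be a probability space with $\sigma$-fields $\{\emptyset,\Omega\}=\mathcal{F}_0\subseteq\mathcal{F}_1\subseteq\cdots\subseteq\mathcal{F}_n\subseteq\mathcal{F}$, and let $(\xi_i,\mathcal{F}_i)_{i=1,\dots,n}$ be a sequence of supermartingale differences, i.e. each $\xi_i$ is real-valued, $\mathcal{F}_i$-measurable, integrable, and $\mathbf{E}(\xi_i\mid\mathcal{F}_{i-1})\le 0$. Let $\beta\in(1,2)$ be a constant and assume $\mathbf{E}|\xi_i|^\beta<\infty$ for all $i\in[1,n]$. Let $S_k=\sum_{i=1}^k\xi_i$ and \[ \mathrm{G}^0_k(\beta)=\sum_{i=1}^k\Big(\mathbf{E}\big((\xi_i^-)^\beta\mid\mathcal{F}_{i-1}\big)+(\xi_i^+)^\beta\Big),\qquad k\in[1,n], \] where $x^+=\max\{x,0\}$ and $x^-=-\min\{x,0\}$. Then for all $x,v>0$, \[ \mathbf{P}\Big(S_k\ge x\ \text{and}\ \mathrm{G}^0_k(\beta)\le v^\beta\ \text{for some}\ k\in[1,n]\Big)\le\exp\left\{-C(\beta)\left(\frac{x}{v}\right)^{\frac{\beta}{\beta-1}}\right\}, \] where $C(\beta)=\beta^{\frac{1}{1-\beta}}\left(1-\beta^{-1}\right)$. *)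

theory Defs
  imports "HOL-Probability.Probability"
begin

definition C_const :: "real \<Rightarrow> real" where
  "C_const \<beta> = \<beta> powr (1 / (1 - \<beta>)) * (1 - 1 / \<beta>)"

definition pos_part :: "real \<Rightarrow> real" where
  "pos_part t = max t 0"

definition neg_part :: "real \<Rightarrow> real" where
  "neg_part t = - min t 0"

definition G0 :: "'a measure \<Rightarrow> (nat \<Rightarrow> 'a measure) \<Rightarrow> (nat \<Rightarrow> 'a \<Rightarrow> real) \<Rightarrow> real \<Rightarrow> nat \<Rightarrow> 'a \<Rightarrow> real" where
  "G0 M F \<xi> \<beta> k \<omega> = (\<Sum>i=1..k.
      real_cond_exp M (F (i - 1)) (\<lambda>\<omega>'. neg_part (\<xi> i \<omega>') powr \<beta>) \<omega>
      + pos_part (\<xi> i \<omega>) powr \<beta>)"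

end

theory Submission
  imports Defs
begin

text \<open>
  For \<lambda> > 0 and c = \<lambda>^\<beta> / \<beta> the process Z_k = exp (\<lambda> S_k - c G^0_k(\<beta>)) is a
  nonnegative supermartingale with Z_0 = 1. The step from k - 1 to k rests on the elementary
  inequality exp (t - (t^+)^\<beta> / \<beta>) \<le> 1 + t + (t^-)^\<beta> / \<beta> for 1 < \<beta> \<le> 2: at t = \<lambda> \<xi>_k
  the conditional expectation of the right-hand side given F_(k-1) is at most
  1 + c E((\<xi>_k^-)^\<beta> | F_(k-1)) \<le> exp (c E((\<xi>_k^-)^\<beta> | F_(k-1))), and this factor is cancelled
  by the conditional term of G^0. On the event in question some Z_k is at least
  exp (\<lambda> x - c v^\<beta>), so Ville's maximal inequality bounds its probability by
  exp (-(\<lambda> x - c v^\<beta>)). The optimal \<lambda> turns the exponent into (1 - 1/\<beta>) (x/v)^(\<beta>/(\<beta>-1)),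
  which dominates C(\<beta>) (x/v)^(\<beta>/(\<beta>-1)).
\<close>

lemma min_one_le_powr:
  fixes y b :: real
  assumes "0 \<le> y" "0 \<le> b" "b \<le> 1"
  shows "min y 1 \<le> y powr b"
proof (cases "y < 1")
  case True
  have "y powr 1 \<le> y powr b" if "0 < y"
    using that True assms by (intro powr_mono') auto
  then show ?thesis
    using assms by (cases "y = 0") auto
next
  case False
  then show ?thesis using assms by (simp add: ge_one_powr_ge_zero)
qed

lemma exp_sub_powr_div_le:
  fixes \<beta> s :: real
  assumes "1 < \<beta>" "\<beta> \<le> 2" "0 \<le> s"
  shows "exp (s - s powr \<beta> / \<beta>) \<le> 1 + s"
proof -
  define h where "h y = ln (1 + y) - y + y powr \<beta> / \<beta>" for y :: real
  have "h 0 \<le> h s"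
  proof (rule DERIV_nonneg_imp_increasing_open[OF assms(3)])
    fix y :: real
    assume y: "0 < y" "y < s"
    have "y / (1 + y) \<le> min y 1"
      using y by (simp add: divide_le_eq)
    also have "\<dots> \<le> y powr (\<beta> - 1)"
      using y assms by (intro min_one_le_powr) auto
    finally have "0 \<le> 1 / (1 + y) - 1 + \<beta> * y powr (\<beta> - 1) / \<beta>"
      using y assms by (simp add: field_simps)
    moreover have "DERIV h y :> 1 / (1 + y) - 1 + \<beta> * y powr (\<beta> - 1) / \<beta>"
      unfolding h_def using y by (auto intro!: derivative_eq_intros)
    ultimately show "\<exists>d. DERIV h y :> d \<and> 0 \<le> d" by blast
  next
    show "continuous_on {0..s} h"
      unfolding h_def using assms by (intro continuous_intros continuous_on_powr') auto
  qed
  then have "s - s powr \<beta> / \<beta> \<le> ln (1 + s)"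
    unfolding h_def by simp
  then have "exp (s - s powr \<beta> / \<beta>) \<le> exp (ln (1 + s))"
    by simp
  then show ?thesis
    using assms by simp
qed

lemma exp_neg_le_powr_div:
  fixes \<beta> t :: real
  assumes "1 < \<beta>" "\<beta> \<le> 2" "0 \<le> t"
  shows "exp (- t) \<le> 1 - t + t powr \<beta> / \<beta>"
proof -
  define g where "g y = 1 - y + y powr \<beta> / \<beta> - exp (- y)" for y :: real
  have "g 0 \<le> g t"
  proof (rule DERIV_nonneg_imp_increasing_open[OF assms(3)])
    fix y :: real
    assume y: "0 < y" "y < t"
    have "1 - exp (- y) \<le> min y 1"
      using exp_ge_add_one_self[of "- y"] by simp
    also have "\<dots> \<le> y powr (\<beta> - 1)"
      using y assms by (intro min_one_le_powr) auto
    finally have "0 \<le> - 1 + \<beta> * y powr (\<beta> - 1) / \<beta> + exp (- y)"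
      using assms by simp
    moreover have "DERIV g y :> - 1 + \<beta> * y powr (\<beta> - 1) / \<beta> + exp (- y)"
      unfolding g_def using y by (auto intro!: derivative_eq_intros)
    ultimately show "\<exists>d. DERIV g y :> d \<and> 0 \<le> d" by blast
  next
    show "continuous_on {0..t} g"
      unfolding g_def using assms by (intro continuous_intros continuous_on_powr') auto
  qed
  then show ?thesis
    unfolding g_def by simp
qed

lemma exp_sub_pos_part_powr_le:
  fixes \<beta> l t :: real
  assumes "1 < \<beta>" "\<beta> \<le> 2" "0 < l"
  shows "exp (l * t - l powr \<beta> / \<beta> * pos_part t powr \<beta>)
           \<le> 1 + l * t + l powr \<beta> / \<beta> * neg_part t powr \<beta>"
proof (cases "0 \<le> t")
  case True
  then have "l powr \<beta> * pos_part t powr \<beta> = (l * t) powr \<beta>" "neg_part t = 0"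
    using assms by (simp_all add: pos_part_def neg_part_def powr_mult)
  then show ?thesis
    using exp_sub_powr_div_le[of \<beta> "l * t"] assms True by simp
next
  case False
  then have "l powr \<beta> * neg_part t powr \<beta> = (- (l * t)) powr \<beta>" "pos_part t = 0"
    using assms powr_mult[of l "- t" \<beta>] by (simp_all add: pos_part_def neg_part_def)
  then show ?thesis
    using exp_neg_le_powr_div[of \<beta> "- (l * t)"] assms False by (simp add: mult_nonneg_nonpos)
qed

lemma exp_neg_mult_one_plus_le: "exp (- y) * (1 + y) \<le> (1::real)"
proof -
  have "exp (- y) * (1 + y) \<le> exp (- y) * exp y"
    by (intro mult_left_mono exp_ge_add_one_self) auto
  then show ?thesis
    by (simp add: exp_minus field_simps)
qed

context sigma_finite_subalgebra
begin

lemma nn_integral_mult_real_cond_exp: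
  assumes U: "integrable M U" "\<And>x. 0 \<le> U x"
    and [measurable]: "K \<in> borel_measurable F"
  shows "(\<integral>\<^sup>+x. K x * ennreal (real_cond_exp M F U x) \<partial>M) = (\<integral>\<^sup>+x. K x * ennreal (U x) \<partial>M)"
proof -
  have [measurable]: "U \<in> borel_measurable M"
    using U(1) by blast
  have "AE x in M. ennreal (real_cond_exp M F U x) = nn_cond_exp M F (\<lambda>x. ennreal (U x)) x"
  proof (rule nn_cond_exp_charact)
    fix A
    assume A: "A \<in> sets F"
    then have AM: "A \<in> sets M"
      using subalg by (auto simp: subalgebra_def)
    have "AE x in M. 0 \<le> real_cond_exp M F U x"
      using U by (intro real_cond_exp_pos) auto
    then have "ennreal (\<integral>x\<in>A. real_cond_exp M F U x \<partial>M) = (\<integral>\<^sup>+x\<in>A. real_cond_exp M F U x \<partial>M)"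
      using U AM by (intro nn_set_integral_eq_set_integral[symmetric]) auto
    moreover have "(\<integral>\<^sup>+x\<in>A. U x \<partial>M) = ennreal (\<integral>x\<in>A. U x \<partial>M)"
      using U AM by (intro nn_set_integral_eq_set_integral) auto
    ultimately show "(\<integral>\<^sup>+x\<in>A. ennreal (U x) \<partial>M) = (\<integral>\<^sup>+x\<in>A. ennreal (real_cond_exp M F U x) \<partial>M)"
      using real_cond_exp_intA[OF U(1) A] by simp
  qed auto
  then have "(\<integral>\<^sup>+x. K x * ennreal (real_cond_exp M F U x) \<partial>M)
      = (\<integral>\<^sup>+x. K x * nn_cond_exp M F (\<lambda>x. ennreal (U x)) x \<partial>M)"
    by (intro nn_integral_cong_AE) auto
  also have "\<dots> = (\<integral>\<^sup>+x. K x * ennreal (U x) \<partial>M)"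
    by (rule nn_cond_exp_intg) auto
  finally show ?thesis .
qed

lemma nn_integral_exp_neg_mult_le:
  assumes U: "integrable M U" "\<And>x. 0 \<le> U x"
    and cond_U: "AE x in M. real_cond_exp M F U x \<le> 1 + Y x"
    and [measurable]: "Y \<in> borel_measurable F" "H \<in> borel_measurable F"
  shows "(\<integral>\<^sup>+x. H x * ennreal (exp (- Y x) * U x) \<partial>M) \<le> (\<integral>\<^sup>+x. H x \<partial>M)"
proof -
  have "(\<integral>\<^sup>+x. H x * ennreal (exp (- Y x) * U x) \<partial>M)
      = (\<integral>\<^sup>+x. (H x * ennreal (exp (- Y x))) * ennreal (U x) \<partial>M)"
    by (simp add: ennreal_mult' mult.assoc)
  also have "\<dots> = (\<integral>\<^sup>+x. (H x * ennreal (exp (- Y x))) * ennreal (real_cond_exp M F U x) \<partial>M)"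
    using U by (intro nn_integral_mult_real_cond_exp[symmetric]) auto
  also have "\<dots> \<le> (\<integral>\<^sup>+x. H x \<partial>M)"
  proof (rule nn_integral_mono_AE)
    show "AE x in M. H x * ennreal (exp (- Y x)) * ennreal (real_cond_exp M F U x) \<le> H x"
      using cond_U
    proof eventually_elim
      case (elim x)
      have "exp (- Y x) * real_cond_exp M F U x \<le> exp (- Y x) * (1 + Y x)"
        using elim by (intro mult_left_mono) auto
      also have "\<dots> \<le> 1"
        by (rule exp_neg_mult_one_plus_le)
      finally have "ennreal (exp (- Y x)) * ennreal (real_cond_exp M F U x) \<le> 1"
        by (simp add: ennreal_mult'[symmetric] ennreal_le_1)
      then show ?case
        using mult_left_mono[of _ 1 "H x"] by (simp add: mult.assoc)
    qed
  qed
  finally show ?thesis .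
qed

end

context finite_measure_subalgebra
begin

lemma real_cond_exp_affine_le:
  assumes f: "integrable M f" and g: "integrable M g"
    and f_cond: "AE \<omega> in M. real_cond_exp M F f \<omega> \<le> 0" and l: "0 \<le> l"
  shows "AE \<omega> in M. real_cond_exp M F (\<lambda>\<omega>. 1 + l * f \<omega> + c * g \<omega>) \<omega>
           \<le> 1 + c * real_cond_exp M F g \<omega>"
proof -
  have "AE \<omega> in M. real_cond_exp M F (\<lambda>\<omega>. 1 + l * f \<omega> + c * g \<omega>) \<omega>
      = real_cond_exp M F (\<lambda>\<omega>. 1 + l * f \<omega>) \<omega> + real_cond_exp M F (\<lambda>\<omega>. c * g \<omega>) \<omega>"
    using f g by (intro real_cond_exp_add) auto
  moreover have "AE \<omega> in M. real_cond_exp M F (\<lambda>\<omega>. 1 + l * f \<omega>) \<omega>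
      = real_cond_exp M F (\<lambda>\<omega>. 1) \<omega> + real_cond_exp M F (\<lambda>\<omega>. l * f \<omega>) \<omega>"
    using f by (intro real_cond_exp_add) auto
  moreover have "AE \<omega> in M. real_cond_exp M F (\<lambda>\<omega>. 1) \<omega> = 1"
    by (intro real_cond_exp_F_meas) auto
  moreover have "AE \<omega> in M. real_cond_exp M F (\<lambda>\<omega>. l * f \<omega>) \<omega> = l * real_cond_exp M F f \<omega>"
    using f by auto
  moreover have "AE \<omega> in M. real_cond_exp M F (\<lambda>\<omega>. c * g \<omega>) \<omega> = c * real_cond_exp M F g \<omega>"
    using g by auto
  ultimately show ?thesis
    using f_cond by eventually_elim (use l in \<open>simp add: mult_nonneg_nonpos\<close>)
qed

lemma nn_integral_exp_increment_le:
  fixes f :: "'a \<Rightarrow> real" and H :: "'a \<Rightarrow> ennreal"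
  assumes f: "integrable M f" and moment: "integrable M (\<lambda>\<omega>. \<bar>f \<omega>\<bar> powr \<beta>)"
    and supermart: "AE \<omega> in M. real_cond_exp M F f \<omega> \<le> 0"
    and H[measurable]: "H \<in> borel_measurable F"
    and \<beta>: "1 < \<beta>" "\<beta> \<le> 2" and l: "0 < l"
  shows "(\<integral>\<^sup>+\<omega>. H \<omega> * ennreal (exp (l * f \<omega> - l powr \<beta> / \<beta> * (pos_part (f \<omega>) powr \<beta>
            + real_cond_exp M F (\<lambda>\<omega>. neg_part (f \<omega>) powr \<beta>) \<omega>))) \<partial>M)
         \<le> (\<integral>\<^sup>+\<omega>. H \<omega> \<partial>M)"
proof -
  define c where "c = l powr \<beta> / \<beta>"
  define g where "g \<omega> = neg_part (f \<omega>) powr \<beta>" for \<omega>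
  define E where "E = real_cond_exp M F g"
  define U where "U \<omega> = 1 + l * f \<omega> + c * g \<omega>" for \<omega>
  have [measurable]: "f \<in> borel_measurable M"
    using f by blast
  have [measurable]: "g \<in> borel_measurable M"
    unfolding g_def neg_part_def by measurable
  have g: "integrable M g"
    using moment by (rule Bochner_Integration.integrable_bound)
      (auto simp: g_def neg_part_def min_def)
  have U: "integrable M U"
    unfolding U_def using f g by auto
  have exp_le_U: "exp (l * f \<omega> - c * pos_part (f \<omega>) powr \<beta>) \<le> U \<omega>" for \<omega>
    using exp_sub_pos_part_powr_le[OF \<beta> l] unfolding U_def c_def g_def .
  then have U_nonneg: "0 \<le> U \<omega>" for \<omega>
    by (rule order_trans[rotated]) simp
  have cond_U: "AE \<omega> in M. real_cond_exp M F U \<omega> \<le> 1 + c * E \<omega>"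
    unfolding U_def E_def using f g supermart l by (intro real_cond_exp_affine_le) auto
  have "(\<integral>\<^sup>+\<omega>. H \<omega> * ennreal (exp (l * f \<omega> - c * (pos_part (f \<omega>) powr \<beta> + E \<omega>))) \<partial>M)
      \<le> (\<integral>\<^sup>+\<omega>. H \<omega> * ennreal (exp (- (c * E \<omega>)) * U \<omega>) \<partial>M)"
  proof (intro nn_integral_mono mult_left_mono ennreal_leI)
    fix \<omega>
    have "exp (l * f \<omega> - c * (pos_part (f \<omega>) powr \<beta> + E \<omega>))
        = exp (- (c * E \<omega>)) * exp (l * f \<omega> - c * pos_part (f \<omega>) powr \<beta>)"
      by (simp add: exp_add[symmetric] algebra_simps)
    also have "\<dots> \<le> exp (- (c * E \<omega>)) * U \<omega>"
      using exp_le_U by (rule mult_left_mono) simp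
    finally show "exp (l * f \<omega> - c * (pos_part (f \<omega>) powr \<beta> + E \<omega>)) \<le> exp (- (c * E \<omega>)) * U \<omega>" .
  qed simp
  also have "\<dots> \<le> (\<integral>\<^sup>+\<omega>. H \<omega> \<partial>M)"
    using U U_nonneg cond_U unfolding E_def by (intro nn_integral_exp_neg_mult_le) auto
  finally show ?thesis
    unfolding c_def E_def g_def .
qed

end

locale finite_filtration =
  fixes M :: "'a measure" and F :: "nat \<Rightarrow> 'a measure" and n :: nat
  assumes subalgebra_F: "\<And>i. i \<le> n \<Longrightarrow> subalgebra M (F i)"
    and sets_F_Suc: "\<And>i. i < n \<Longrightarrow> sets (F i) \<subseteq> sets (F (Suc i))"
begin

lemma space_F: "i \<le> n \<Longrightarrow> space (F i) = space M"
  using subalgebra_F by (simp add: subalgebra_def)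

lemma sets_F_subset: "i \<le> n \<Longrightarrow> A \<in> sets (F i) \<Longrightarrow> A \<in> sets M"
  using subalgebra_F by (auto simp: subalgebra_def)

lemma sets_F_mono:
  assumes "i \<le> j" "j \<le> n"
  shows "sets (F i) \<subseteq> sets (F j)"
  using assms
proof (induction j rule: dec_induct)
  case (step j)
  then show ?case
    using sets_F_Suc[of j] by simp
qed simp

lemma measurable_F_mono:
  assumes "i \<le> j" "j \<le> n" "f \<in> measurable (F i) N"
  shows "f \<in> measurable (F j) N"
proof (rule measurable_from_subalg[OF _ assms(3)])
  show "subalgebra (F j) (F i)"
    using sets_F_mono[OF assms(1,2)] space_F assms by (simp add: subalgebra_def)
qed

lemma measurable_F_imp_M: "i \<le> n \<Longrightarrow> f \<in> measurable (F i) N \<Longrightarrow> f \<in> measurable M N"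
  using measurable_from_subalg subalgebra_F by blast

end

locale nn_supermartingale = finite_filtration +
  fixes Z :: "nat \<Rightarrow> 'a \<Rightarrow> ennreal"
  \<comment> \<open>The supermartingale property is tested against nonnegative F_k-measurable weights
    instead of being stated with conditional expectations, which suits ennreal-valued Z.\<close>
  assumes adapted_Z: "\<And>k. k \<le> n \<Longrightarrow> Z k \<in> borel_measurable (F k)"
    and supermartingale_Z: "\<And>k H. k < n \<Longrightarrow> H \<in> borel_measurable (F k) \<Longrightarrow>
        (\<integral>\<^sup>+\<omega>. H \<omega> * Z (Suc k) \<omega> \<partial>M) \<le> (\<integral>\<^sup>+\<omega>. H \<omega> * Z k \<omega> \<partial>M)"
begin

definition first_exceedance :: "ennreal \<Rightarrow> nat \<Rightarrow> 'a set" where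
  "first_exceedance a k = {\<omega>\<in>space M. (\<forall>j\<in>{..<k}. Z j \<omega> < a) \<and> a \<le> Z k \<omega>}"

definition below_until :: "ennreal \<Rightarrow> nat \<Rightarrow> 'a set" where
  "below_until a m = {\<omega>\<in>space M. \<forall>j\<in>{..m}. Z j \<omega> < a}"

lemma measurable_Z:
  assumes "k \<le> n"
  shows "Z k \<in> borel_measurable M"
  using measurable_F_imp_M[OF assms adapted_Z[OF assms]] .

lemma pred_Z:
  assumes "j \<le> k" "k \<le> n"
  shows "Measurable.pred (F k) (\<lambda>\<omega>. Z j \<omega> < a)" "Measurable.pred (F k) (\<lambda>\<omega>. a \<le> Z j \<omega>)"
proof -
  have Z: "Z j \<in> borel_measurable (F k)"
    using assms by (intro measurable_F_mono[OF _ _ adapted_Z]) auto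
  show "Measurable.pred (F k) (\<lambda>\<omega>. Z j \<omega> < a)" "Measurable.pred (F k) (\<lambda>\<omega>. a \<le> Z j \<omega>)"
    unfolding pred_def
    using borel_measurable_less[OF Z measurable_const] borel_measurable_le[OF measurable_const Z]
    by auto
qed

lemma sets_first_exceedance: "k \<le> n \<Longrightarrow> first_exceedance a k \<in> sets (F k)"
proof -
  assume k: "k \<le> n"
  then have "Measurable.pred (F k) (\<lambda>\<omega>. (\<forall>j\<in>{..<k}. Z j \<omega> < a) \<and> a \<le> Z k \<omega>)"
    by (intro pred_intros_finite pred_intros_logic) (auto intro: pred_Z)
  then show ?thesis
    unfolding first_exceedance_def pred_def using space_F k by simp
qed

lemma sets_below_until: "m \<le> n \<Longrightarrow> below_until a m \<in> sets (F m)"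
proof -
  assume m: "m \<le> n"
  then have "Measurable.pred (F m) (\<lambda>\<omega>. \<forall>j\<in>{..m}. Z j \<omega> < a)"
    by (intro pred_intros_finite) (auto intro: pred_Z)
  then show ?thesis
    unfolding below_until_def pred_def using space_F m by simp
qed

lemma sets_exists_ge: "{\<omega>\<in>space M. \<exists>k\<le>n. a \<le> Z k \<omega>} \<in> sets M"
proof -
  have "{\<omega>\<in>space M. a \<le> Z k \<omega>} \<in> sets M" if "k \<le> n" for k
  proof -
    have [measurable]: "Z k \<in> borel_measurable M"
      using measurable_Z that .
    show ?thesis
      by measurable
  qed
  moreover have "{\<omega>\<in>space M. \<exists>k\<le>n. a \<le> Z k \<omega>} = (\<Union>k\<le>n. {\<omega>\<in>space M. a \<le> Z k \<omega>})"
    by blast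
  ultimately show ?thesis
    by auto
qed

lemma nn_integral_below_until_Suc:
  assumes m: "m < n"
  shows "(\<integral>\<^sup>+\<omega>. Z (Suc m) \<omega> * indicator (first_exceedance a (Suc m)) \<omega> \<partial>M)
         + (\<integral>\<^sup>+\<omega>. Z (Suc m) \<omega> * indicator (below_until a (Suc m)) \<omega> \<partial>M)
         \<le> (\<integral>\<^sup>+\<omega>. Z m \<omega> * indicator (below_until a m) \<omega> \<partial>M)"
proof -
  have [measurable]: "Z (Suc m) \<in> borel_measurable M" "below_until a m \<in> sets (F m)"
      "first_exceedance a (Suc m) \<in> sets M" "below_until a (Suc m) \<in> sets M"
    using m measurable_Z sets_below_until sets_F_subset[OF _ sets_first_exceedance]
      sets_F_subset[OF _ sets_below_until] by auto
  have "(\<integral>\<^sup>+\<omega>. Z (Suc m) \<omega> * indicator (first_exceedance a (Suc m)) \<omega> \<partial>M)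
      + (\<integral>\<^sup>+\<omega>. Z (Suc m) \<omega> * indicator (below_until a (Suc m)) \<omega> \<partial>M)
      = (\<integral>\<^sup>+\<omega>. Z (Suc m) \<omega> * indicator (first_exceedance a (Suc m)) \<omega>
          + Z (Suc m) \<omega> * indicator (below_until a (Suc m)) \<omega> \<partial>M)"
    by (rule nn_integral_add[symmetric]) auto
  also have "\<dots> = (\<integral>\<^sup>+\<omega>. indicator (below_until a m) \<omega> * Z (Suc m) \<omega> \<partial>M)"
    by (rule nn_integral_cong) (auto simp: first_exceedance_def below_until_def indicator_def
        not_le lessThan_Suc_atMost atMost_Suc)
  also have "\<dots> \<le> (\<integral>\<^sup>+\<omega>. indicator (below_until a m) \<omega> * Z m \<omega> \<partial>M)"
    using m by (intro supermartingale_Z borel_measurable_indicator) auto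
  finally show ?thesis
    by (simp add: mult.commute)
qed

text \<open>Optional stopping at the first exceedance of a, truncated at time m.\<close>

lemma nn_integral_stopped_le:
  "m \<le> n \<Longrightarrow> (\<Sum>k\<le>m. \<integral>\<^sup>+\<omega>. Z k \<omega> * indicator (first_exceedance a k) \<omega> \<partial>M)
      + (\<integral>\<^sup>+\<omega>. Z m \<omega> * indicator (below_until a m) \<omega> \<partial>M) \<le> (\<integral>\<^sup>+\<omega>. Z 0 \<omega> \<partial>M)"
proof (induction m)
  case 0
  have [measurable]: "Z 0 \<in> borel_measurable M"
      "first_exceedance a 0 \<in> sets M" "below_until a 0 \<in> sets M"
    using measurable_Z sets_F_subset[OF _ sets_first_exceedance]
      sets_F_subset[OF _ sets_below_until] by auto
  have "(\<integral>\<^sup>+\<omega>. Z 0 \<omega> * indicator (first_exceedance a 0) \<omega> \<partial>M)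
      + (\<integral>\<^sup>+\<omega>. Z 0 \<omega> * indicator (below_until a 0) \<omega> \<partial>M)
      = (\<integral>\<^sup>+\<omega>. Z 0 \<omega> * indicator (first_exceedance a 0) \<omega>
          + Z 0 \<omega> * indicator (below_until a 0) \<omega> \<partial>M)"
    by (rule nn_integral_add[symmetric]) auto
  also have "\<dots> = (\<integral>\<^sup>+\<omega>. Z 0 \<omega> \<partial>M)"
    by (rule nn_integral_cong)
      (auto simp: first_exceedance_def below_until_def indicator_def not_le)
  finally show ?case
    by simp
next
  case (Suc m)
  have "(\<Sum>k\<le>Suc m. \<integral>\<^sup>+\<omega>. Z k \<omega> * indicator (first_exceedance a k) \<omega> \<partial>M)
      + (\<integral>\<^sup>+\<omega>. Z (Suc m) \<omega> * indicator (below_until a (Suc m)) \<omega> \<partial>M)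
      \<le> (\<Sum>k\<le>m. \<integral>\<^sup>+\<omega>. Z k \<omega> * indicator (first_exceedance a k) \<omega> \<partial>M)
        + (\<integral>\<^sup>+\<omega>. Z m \<omega> * indicator (below_until a m) \<omega> \<partial>M)"
    using nn_integral_below_until_Suc[of m a] Suc.prems by (simp add: add.assoc add_left_mono)
  also have "\<dots> \<le> (\<integral>\<^sup>+\<omega>. Z 0 \<omega> \<partial>M)"
    using Suc by simp
  finally show ?case .
qed

lemma ge_le_sum_first_exceedance:
  assumes "\<omega> \<in> space M" "k0 \<le> n" "a \<le> Z k0 \<omega>"
  shows "a \<le> (\<Sum>k\<le>n. Z k \<omega> * indicator (first_exceedance a k) \<omega>)"
proof -
  define k where "k = (LEAST k. a \<le> Z k \<omega>)"
  have hit: "a \<le> Z k \<omega>"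
    unfolding k_def using assms(3) by (rule LeastI)
  have "k \<le> n"
    using Least_le[of "\<lambda>k. a \<le> Z k \<omega>", OF assms(3)] assms(2) unfolding k_def by simp
  have "Z j \<omega> < a" if "j < k" for j
    using not_less_Least[of j "\<lambda>k. a \<le> Z k \<omega>"] that unfolding k_def by (simp add: not_le)
  then have "\<omega> \<in> first_exceedance a k"
    using hit assms(1) unfolding first_exceedance_def by auto
  then have "a \<le> Z k \<omega> * indicator (first_exceedance a k) \<omega>"
    using hit by simp
  also have "\<dots> \<le> (\<Sum>k\<le>n. Z k \<omega> * indicator (first_exceedance a k) \<omega>)"
    using \<open>k \<le> n\<close> by (intro member_le_sum) auto
  finally show ?thesis .
qed

theorem maximal_ineq:
  "a * emeasure M {\<omega>\<in>space M. \<exists>k\<le>n. a \<le> Z k \<omega>} \<le> (\<integral>\<^sup>+\<omega>. Z 0 \<omega> \<partial>M)"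
proof -
  define E where "E = {\<omega>\<in>space M. \<exists>k\<le>n. a \<le> Z k \<omega>}"
  have E: "E \<in> sets M"
    unfolding E_def by (rule sets_exists_ge)
  have pointwise: "a * indicator E \<omega> \<le> (\<Sum>k\<le>n. Z k \<omega> * indicator (first_exceedance a k) \<omega>)"
    for \<omega>
  proof (cases "\<omega> \<in> E")
    case True
    then obtain k0 where "\<omega> \<in> space M" "k0 \<le> n" "a \<le> Z k0 \<omega>"
      unfolding E_def by blast
    then have "a \<le> (\<Sum>k\<le>n. Z k \<omega> * indicator (first_exceedance a k) \<omega>)"
      by (rule ge_le_sum_first_exceedance)
    then show ?thesis
      using True by (simp only: indicator_simps(1) mult_1_right)
  qed simp
  have "a * emeasure M E = (\<integral>\<^sup>+\<omega>. a * indicator E \<omega> \<partial>M)"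
    using E by (rule nn_integral_cmult_indicator[symmetric])
  also have "\<dots> \<le> (\<integral>\<^sup>+\<omega>. (\<Sum>k\<le>n. Z k \<omega> * indicator (first_exceedance a k) \<omega>) \<partial>M)"
    using pointwise by (rule nn_integral_mono)
  also have "\<dots> = (\<Sum>k\<le>n. \<integral>\<^sup>+\<omega>. Z k \<omega> * indicator (first_exceedance a k) \<omega> \<partial>M)"
    using measurable_Z sets_F_subset[OF _ sets_first_exceedance] by (intro nn_integral_sum) auto
  also have "\<dots> \<le> (\<Sum>k\<le>n. \<integral>\<^sup>+\<omega>. Z k \<omega> * indicator (first_exceedance a k) \<omega> \<partial>M)
      + (\<integral>\<^sup>+\<omega>. Z n \<omega> * indicator (below_until a n) \<omega> \<partial>M)"
    by (rule add_increasing2) auto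
  also have "\<dots> \<le> (\<integral>\<^sup>+\<omega>. Z 0 \<omega> \<partial>M)"
    by (rule nn_integral_stopped_le) simp
  finally show ?thesis
    unfolding E_def .
qed

end

locale supermartingale_differences = finite_filtration M F n + prob_space M
  for M :: "'a measure" and F n +
  fixes \<xi> :: "nat \<Rightarrow> 'a \<Rightarrow> real" and \<beta> :: real
  assumes adapted: "\<And>i. 1 \<le> i \<Longrightarrow> i \<le> n \<Longrightarrow> \<xi> i \<in> borel_measurable (F i)"
    and integrable_\<xi>: "\<And>i. 1 \<le> i \<Longrightarrow> i \<le> n \<Longrightarrow> integrable M (\<xi> i)"
    and cond_exp_\<xi>_nonpos: "\<And>i. 1 \<le> i \<Longrightarrow> i \<le> n \<Longrightarrow>
        AE \<omega> in M. real_cond_exp M (F (i - 1)) (\<xi> i) \<omega> \<le> 0"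
    and \<beta>_gt_1: "1 < \<beta>" and \<beta>_le_2: "\<beta> \<le> 2"
    and integrable_moment: "\<And>i. 1 \<le> i \<Longrightarrow> i \<le> n \<Longrightarrow> integrable M (\<lambda>\<omega>. \<bar>\<xi> i \<omega>\<bar> powr \<beta>)"
begin

lemma measurable_\<xi>:
  assumes "1 \<le> i" "i \<le> m" "m \<le> n"
  shows "\<xi> i \<in> borel_measurable (F m)"
  using assms by (intro measurable_F_mono[OF _ _ adapted[of i]]) auto

lemma measurable_partial_sum:
  "k \<le> m \<Longrightarrow> m \<le> n \<Longrightarrow> (\<lambda>\<omega>. \<Sum>i=1..k. \<xi> i \<omega>) \<in> borel_measurable (F m)"
  by (intro borel_measurable_sum measurable_\<xi>) auto

lemma measurable_G0:
  assumes "k \<le> m" "m \<le> n"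
  shows "G0 M F \<xi> \<beta> k \<in> borel_measurable (F m)"
  unfolding G0_def
proof (intro borel_measurable_sum borel_measurable_add)
  fix i
  assume i: "i \<in> {1..k}"
  then have [measurable]: "\<xi> i \<in> borel_measurable (F m)"
    using assms by (intro measurable_\<xi>) auto
  show "(\<lambda>\<omega>. pos_part (\<xi> i \<omega>) powr \<beta>) \<in> borel_measurable (F m)"
    unfolding pos_part_def by measurable
  show "real_cond_exp M (F (i - 1)) (\<lambda>\<omega>. neg_part (\<xi> i \<omega>) powr \<beta>) \<in> borel_measurable (F m)"
    using i assms by (intro measurable_F_mono[OF _ _ borel_measurable_cond_exp]) auto
qed

definition exponential_process :: "real \<Rightarrow> nat \<Rightarrow> 'a \<Rightarrow> ennreal" where
  "exponential_process l k \<omega> =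
     ennreal (exp (l * (\<Sum>i=1..k. \<xi> i \<omega>) - l powr \<beta> / \<beta> * G0 M F \<xi> \<beta> k \<omega>))"

lemma measurable_exponential_process:
  assumes "k \<le> n"
  shows "exponential_process l k \<in> borel_measurable (F k)"
proof -
  have [measurable]: "(\<lambda>\<omega>. \<Sum>i=1..k. \<xi> i \<omega>) \<in> borel_measurable (F k)"
      "G0 M F \<xi> \<beta> k \<in> borel_measurable (F k)"
    using measurable_partial_sum measurable_G0 assms by auto
  show ?thesis
    unfolding exponential_process_def by measurable
qed

lemma exponential_process_0: "exponential_process l 0 \<omega> = 1"
  by (simp add: exponential_process_def G0_def)

lemma exponential_process_Suc:
  "exponential_process l (Suc k) \<omega> = exponential_process l k \<omega> *
     ennreal (exp (l * \<xi> (Suc k) \<omega> - l powr \<beta> / \<beta> * (pos_part (\<xi> (Suc k) \<omega>) powr \<beta>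
       + real_cond_exp M (F k) (\<lambda>\<omega>'. neg_part (\<xi> (Suc k) \<omega>') powr \<beta>) \<omega>)))"
  unfolding exponential_process_def G0_def
  by (simp add: ennreal_mult'[symmetric] exp_add[symmetric] algebra_simps)

lemma exponential_process_supermartingale:
  assumes l: "0 < l" and k: "k < n" and H[measurable]: "H \<in> borel_measurable (F k)"
  shows "(\<integral>\<^sup>+\<omega>. H \<omega> * exponential_process l (Suc k) \<omega> \<partial>M)
           \<le> (\<integral>\<^sup>+\<omega>. H \<omega> * exponential_process l k \<omega> \<partial>M)"
proof -
  interpret finite_measure_subalgebra M "F k"
    using k subalgebra_F by unfold_locales auto
  have [measurable]: "exponential_process l k \<in> borel_measurable (F k)"
    using k by (intro measurable_exponential_process) auto
  show ?thesis
    unfolding exponential_process_Suc mult.assoc[symmetric]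
    using k \<beta>_gt_1 \<beta>_le_2 l
    by (intro nn_integral_exp_increment_le integrable_\<xi> integrable_moment)
      (auto intro: cond_exp_\<xi>_nonpos[of "Suc k", simplified])
qed

theorem maximal_exponential_bound:
  assumes l: "0 < l"
  shows "measure M {\<omega> \<in> space M. \<exists>k\<in>{1..n}.
            x \<le> (\<Sum>i=1..k. \<xi> i \<omega>) \<and> G0 M F \<xi> \<beta> k \<omega> \<le> w}
         \<le> exp (- (l * x - l powr \<beta> / \<beta> * w))"
proof -
  define \<theta> where "\<theta> = l * x - l powr \<beta> / \<beta> * w"
  define B where "B = {\<omega>\<in>space M. \<exists>k\<le>n. ennreal (exp \<theta>) \<le> exponential_process l k \<omega>}"
  interpret Z: nn_supermartingale M F n "exponential_process l"
    using l by unfold_locales (auto intro: measurable_exponential_process exponential_process_supermartingale)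
  have "ennreal (exp \<theta>) * emeasure M B \<le> (\<integral>\<^sup>+\<omega>. exponential_process l 0 \<omega> \<partial>M)"
    unfolding B_def by (rule Z.maximal_ineq)
  then have "exp \<theta> * measure M B \<le> 1"
    by (simp add: exponential_process_0 emeasure_eq_measure prob_space ennreal_mult'[symmetric])
  then have B_bound: "measure M B \<le> exp (- \<theta>)"
    by (simp add: exp_minus field_simps)
  have "{\<omega> \<in> space M. \<exists>k\<in>{1..n}. x \<le> (\<Sum>i=1..k. \<xi> i \<omega>) \<and> G0 M F \<xi> \<beta> k \<omega> \<le> w} \<subseteq> B"
  proof safe
    fix \<omega> k
    assume "\<omega> \<in> space M" "k \<in> {1..n}" "x \<le> (\<Sum>i=1..k. \<xi> i \<omega>)" "G0 M F \<xi> \<beta> k \<omega> \<le> w"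
    moreover have "0 \<le> l powr \<beta> / \<beta>"
      using \<beta>_gt_1 by simp
    ultimately have "\<theta> \<le> l * (\<Sum>i=1..k. \<xi> i \<omega>) - l powr \<beta> / \<beta> * G0 M F \<xi> \<beta> k \<omega>"
      unfolding \<theta>_def using l by (intro diff_mono mult_left_mono) auto
    then show "\<omega> \<in> B"
      unfolding B_def exponential_process_def using \<open>\<omega> \<in> space M\<close> \<open>k \<in> {1..n}\<close>
      by (auto intro!: ennreal_leI)
  qed
  then have "measure M {\<omega> \<in> space M. \<exists>k\<in>{1..n}.
      x \<le> (\<Sum>i=1..k. \<xi> i \<omega>) \<and> G0 M F \<xi> \<beta> k \<omega> \<le> w} \<le> measure M B"
    unfolding B_def by (intro finite_measure_mono Z.sets_exists_ge)
  then show ?thesis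
    using B_bound unfolding \<theta>_def by linarith
qed

end

lemma C_const_le:
  assumes "1 < \<beta>"
  shows "C_const \<beta> \<le> 1 - 1 / \<beta>"
proof -
  have "\<beta> powr (1 / (1 - \<beta>)) \<le> \<beta> powr 0"
    using assms by (intro powr_mono) (auto simp: divide_nonpos_neg)
  then show ?thesis
    unfolding C_const_def using assms by (intro mult_left_le_one_le) auto
qed

text \<open>The value of l maximises \<lambda> \<mapsto> \<lambda> x - \<lambda>^\<beta> v^\<beta> / \<beta>.\<close>

lemma optimal_exponent:
  fixes \<beta> x v :: real
  assumes \<beta>: "1 < \<beta>" and x: "0 < x" and v: "0 < v"
  defines "l \<equiv> (x / v powr \<beta>) powr (1 / (\<beta> - 1))"
  shows "l * x - l powr \<beta> / \<beta> * v powr \<beta> = (1 - 1 / \<beta>) * (x / v) powr (\<beta> / (\<beta> - 1))"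
proof -
  define p where "p = 1 / (\<beta> - 1)"
  define q where "q = x / v powr \<beta>"
  have p: "p * \<beta> = p + 1" "\<beta> * p = p + 1" "p + 1 = \<beta> / (\<beta> - 1)"
    unfolding p_def using \<beta> by (simp_all add: field_simps)
  have "0 < q"
    unfolding q_def using x v by simp
  then have "l powr \<beta> = l * q"
    unfolding l_def p_def[symmetric] q_def[symmetric] by (simp add: powr_powr p(1) powr_add)
  then have power: "l powr \<beta> * v powr \<beta> = l * x"
    unfolding q_def using v by simp
  have "l * x = x powr p / v powr (\<beta> * p) * x powr 1"
    unfolding l_def p_def[symmetric] using x v by (simp add: powr_divide powr_powr)
  also have "\<dots> = x powr (p + 1) / v powr (p + 1)"
    using x by (simp add: p(2) powr_add)
  also have "\<dots> = (x / v) powr (\<beta> / (\<beta> - 1))"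
    using x v by (simp add: p(3) powr_divide)
  finally show ?thesis
    using power \<beta> by (simp add: field_simps)
qed

theorem theorem2p2:
  fixes M :: "'a measure" and F :: "nat \<Rightarrow> 'a measure" and \<xi> :: "nat \<Rightarrow> 'a \<Rightarrow> real"
    and n :: nat and \<beta> x v :: real
  assumes prob: "prob_space M"
    and subalg: "\<And>i. i \<le> n \<Longrightarrow> subalgebra M (F i)"
    and F0: "sets (F 0) = {{}, space M}"
    and mono: "\<And>i. i < n \<Longrightarrow> sets (F i) \<subseteq> sets (F (Suc i))"
    and meas: "\<And>i. 1 \<le> i \<Longrightarrow> i \<le> n \<Longrightarrow> \<xi> i \<in> borel_measurable (F i)"
    and integ: "\<And>i. 1 \<le> i \<Longrightarrow> i \<le> n \<Longrightarrow> integrable M (\<xi> i)"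
    and supmart: "\<And>i. 1 \<le> i \<Longrightarrow> i \<le> n \<Longrightarrow>
        AE \<omega> in M. real_cond_exp M (F (i - 1)) (\<xi> i) \<omega> \<le> 0"
    and beta: "1 < \<beta>" "\<beta> < 2"
    and mom: "\<And>i. 1 \<le> i \<Longrightarrow> i \<le> n \<Longrightarrow> integrable M (\<lambda>\<omega>. \<bar>\<xi> i \<omega>\<bar> powr \<beta>)"
    and xpos: "0 < x" and vpos: "0 < v"
  shows "measure M {\<omega> \<in> space M. \<exists>k\<in>{1..n}.
            (\<Sum>i=1..k. \<xi> i \<omega>) \<ge> x \<and> G0 M F \<xi> \<beta> k \<omega> \<le> v powr \<beta>}
         \<le> exp (- C_const \<beta> * (x / v) powr (\<beta> / (\<beta> - 1)))"
proof -
  interpret supermartingale_differences M F n \<xi> \<beta>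
    using assms
    by (auto simp: supermartingale_differences_def supermartingale_differences_axioms_def
        finite_filtration_def)
  define l where "l = (x / v powr \<beta>) powr (1 / (\<beta> - 1))"
  have "l > 0"
    unfolding l_def using xpos vpos by simp
  then have "measure M {\<omega> \<in> space M. \<exists>k\<in>{1..n}.
      (\<Sum>i=1..k. \<xi> i \<omega>) \<ge> x \<and> G0 M F \<xi> \<beta> k \<omega> \<le> v powr \<beta>}
      \<le> exp (- (l * x - l powr \<beta> / \<beta> * v powr \<beta>))"
    by (rule maximal_exponential_bound)
  also have "\<dots> = exp (- ((1 - 1 / \<beta>) * (x / v) powr (\<beta> / (\<beta> - 1))))"
    unfolding l_def using optimal_exponent[OF beta(1) xpos vpos] by simp
  also have "\<dots> \<le> exp (- C_const \<beta> * (x / v) powr (\<beta> / (\<beta> - 1)))"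
    using C_const_le[OF beta(1)] by (simp add: mult_right_mono)
  finally show ?thesis .
qed

end
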